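(* Consider a single bidder with a constrained additive valuation over $m$ items, whose type $t=(t_1,\dots,t_m)\in\mathbb R_{\ge0}^m$ is drawn either from $\mathcal D=\times_{j\in[m]}\mathcal D_j$ or from $\hat{\mathcal D}=\times_{j\in[m]}\hat{\mathcal D}_j$, with $\|\mathcal D_j-\hat{\mathcal D}_j\|_K\le\xi$ for every $j$. Fix any set $S\subseteq[m]$ of available items, any prices $\{p_j\}_{j\in[m]}$ and any entry fee $\delta(S)$. The bidder pays the entry fee and buys her favorite set $S^*\in\arg\max_{S'\subseteq S}v(t,S')-\sum_{j\in S'}p_j$ if its utility is at least $\delta(S)$, and otherwise buys nothing. Let $\mathcal L$ and $\hat{\mathcal L}$ be the distributions of the set of items purchased from $S$ when $t\sim\mathcal D$ and $t\sim\hat{\mathcal D}$ respectively. Then $\|\mathcal L-\hat{\mathcal L}\|_{TV}\le2m\xi$.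
   Context: A constrained additive valuation: $t_j$ is the value of item $j$ and $v(t,S)=\max_{R\subseteq S,R\in\mathcal I}\sum_{j\in R}t_j$ for some downward-closed $\mathcal I\subseteq2^{[m]}$. Kolmogorov distance: $\|P-Q\|_K=\sup_x|\Pr_P[X\le x]-\Pr_Q[X\le x]|$. Total variation distance: $\|P-Q\|_{TV}=\sup_E|P(E)-Q(E)|$. *)

theory Defs
  imports "HOL-Probability.Probability"
begin

text \<open>Items are 0,...,m-1. A type is a function t :: nat => real (t j = value of item j).\<close>

definition cadd_val :: "nat set set \<Rightarrow> (nat \<Rightarrow> real) \<Rightarrow> nat set \<Rightarrow> real" where
  "cadd_val I t S = Max ((\<lambda>R. \<Sum>j\<in>R. t j) ` {R. R \<subseteq> S \<and> R \<in> I})"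

definition downward_closed :: "nat set set \<Rightarrow> bool" where
  "downward_closed I \<longleftrightarrow> (\<forall>A\<in>I. \<forall>B. B \<subseteq> A \<longrightarrow> B \<in> I)"

definition util :: "nat set set \<Rightarrow> (nat \<Rightarrow> real) \<Rightarrow> (nat \<Rightarrow> real) \<Rightarrow> nat set \<Rightarrow> real" where
  "util I p t S' = cadd_val I t S' - (\<Sum>j\<in>S'. p j)"

text \<open>The favourite set is an element of the argmax; ties are broken by a fixed priority
  (the maximiser with the least priority index).\<close>
definition purchased ::
  "nat set set \<Rightarrow> (nat set \<Rightarrow> nat) \<Rightarrow> nat set \<Rightarrow> (nat \<Rightarrow> real) \<Rightarrow> real \<Rightarrow> (nat \<Rightarrow> real) \<Rightarrow> nat set" where
  "purchased I prio S p delta t =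
     (let M = Max (util I p t ` Pow S);
          Sstar = (ARG_MIN prio A. A \<subseteq> S \<and> util I p t A = M)
      in if M \<ge> delta then Sstar else {})"

definition kolmogorov_dist :: "real measure \<Rightarrow> real measure \<Rightarrow> real" where
  "kolmogorov_dist P Q = (SUP x. \<bar>measure P {..x} - measure Q {..x}\<bar>)"

definition tv_dist :: "'a measure \<Rightarrow> 'a measure \<Rightarrow> real" where
  "tv_dist P Q = (SUP E \<in> sets P. \<bar>measure P E - measure Q E\<bar>)"

end

(*
  Fix all item values except t_k = y.  Every bundle's utility is then either constant in y or of
  the form max c (a + y), so the favourite bundle changes at most once as y grows, and the entry fee
  is refused exactly on a down-set of y.  Hence, as a function of y, the purchased set is a step
  function with at most three steps on nested down-sets of the reals.  The Kolmogorov distance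
  bounds the difference of the two laws on every down-set, and therefore on the preimage of any
  event under such a step function by 2 xi.  Replacing the coordinates of the product measure one
  at a time and integrating this bound over the remaining coordinates gives 2 m xi.
*)
theory Submission
  imports Defs
begin

section \<open>Down-sets of the reals and the Kolmogorov distance\<close>

definition downset :: "'a::order set \<Rightarrow> bool" where
  "downset L \<longleftrightarrow> (\<forall>u\<in>L. \<forall>v\<le>u. v \<in> L)"

lemma downset_cases [consumes 1, case_names empty UNIV atMost lessThan]:
  fixes L :: "'a::conditionally_complete_linorder set"
  assumes "downset L"
  obtains "L = {}" | "L = UNIV" | a where "L = {..a}" | a where "L = {..<a}"
proof (cases "L = {} \<or> L = UNIV")
  case True
  then show ?thesis using that by blast
next
  case False
  then obtain w l where w: "w \<notin> L" and l: "l \<in> L" by auto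
  have bdd: "bdd_above L"
    using assms w by (intro bdd_aboveI[of _ w]) (meson downset_def le_cases)
  have below: "v \<in> L" if "v < Sup L" for v
    using less_cSupD[OF _ that] l assms unfolding downset_def by (metis empty_iff less_imp_le)
  have above: "v \<notin> L" if "Sup L < v" for v
    using cSup_upper[OF _ bdd, of v] that by auto
  show ?thesis
  proof (cases "Sup L \<in> L")
    case True
    then have "L = {..Sup L}" using below above by (force simp: not_less le_less)
    then show ?thesis using that by blast
  next
    case False
    then have "L = {..<Sup L}" using below above by (force simp: not_less le_less)
    then show ?thesis using that by blast
  qed
qed

lemma borel_downset:
  fixes L :: "real set"
  assumes "downset L"
  shows "L \<in> sets borel"
  using assms by (cases rule: downset_cases) auto

lemma abs_measure_atMost_diff_le_kolmogorov_dist: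
  assumes "prob_space P" "prob_space Q"
  shows "\<bar>measure P {..a} - measure Q {..a}\<bar> \<le> kolmogorov_dist P Q"
  unfolding kolmogorov_dist_def
proof (rule cSUP_upper)
  interpret P: prob_space P by fact
  interpret Q: prob_space Q by fact
  show "bdd_above (range (\<lambda>x. \<bar>measure P {..x} - measure Q {..x}\<bar>))"
  proof (intro bdd_aboveI2[where M=1])
    fix x
    show "\<bar>measure P {..x} - measure Q {..x}\<bar> \<le> 1"
      using P.prob_le_1[of "{..x}"] Q.prob_le_1[of "{..x}"]
        measure_nonneg[of P "{..x}"] measure_nonneg[of Q "{..x}"] by linarith
  qed
qed simp

lemma abs_measure_lessThan_diff_le:
  fixes P Q :: "real measure"
  assumes "prob_space P" "prob_space Q" "sets P = sets borel" "sets Q = sets borel"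
    and atMost: "\<And>a. \<bar>measure P {..a} - measure Q {..a}\<bar> \<le> \<xi>"
  shows "\<bar>measure P {..<a} - measure Q {..<a}\<bar> \<le> \<xi>"
proof -
  interpret P: prob_space P by fact
  interpret Q: prob_space Q by fact
  define A where "A n = {..a - 1 / Suc n}" for n :: nat
  have sets: "range A \<subseteq> sets P" "range A \<subseteq> sets Q"
    using assms(3,4) by (auto simp: A_def)
  have "incseq A"
    by (auto simp: A_def incseq_def frac_le intro: order.trans)
  moreover have "(\<Union>n. A n) = {..<a}"
  proof (intro antisym subsetI)
    fix x assume "x \<in> {..<a}"
    then obtain n where "1 / Suc n < a - x" using nat_approx_posE[of "a - x"] by auto
    then show "x \<in> (\<Union>n. A n)" by (auto simp: A_def intro!: exI[of _ n])
  next
    fix x assume "x \<in> (\<Union>n. A n)"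
    then obtain n where "x \<le> a - 1 / Suc n" by (auto simp: A_def)
    moreover have "0 < 1 / real (Suc n)" by simp
    ultimately show "x \<in> {..<a}" unfolding lessThan_iff by linarith
  qed
  ultimately have "(\<lambda>n. \<bar>measure P (A n) - measure Q (A n)\<bar>)
      \<longlonglongrightarrow> \<bar>measure P {..<a} - measure Q {..<a}\<bar>"
    using P.finite_Lim_measure_incseq[OF sets(1)] Q.finite_Lim_measure_incseq[OF sets(2)]
    by (metis tendsto_diff tendsto_rabs)
  then show ?thesis
    by (rule LIMSEQ_le_const2) (auto simp: A_def atMost)
qed

lemma abs_measure_downset_diff_le:
  fixes P Q :: "real measure"
  assumes P: "prob_space P" and Q: "prob_space Q"
    and sets: "sets P = sets borel" "sets Q = sets borel"
    and atMost: "\<And>a. \<bar>measure P {..a} - measure Q {..a}\<bar> \<le> \<xi>"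
    and "downset L"
  shows "\<bar>measure P L - measure Q L\<bar> \<le> \<xi>"
proof -
  interpret P: prob_space P by fact
  interpret Q: prob_space Q by fact
  have "0 \<le> \<xi>" using atMost[of 0] by linarith
  have spaces: "space P = UNIV" "space Q = UNIV"
    using sets_eq_imp_space_eq[OF sets(1)] sets_eq_imp_space_eq[OF sets(2)] by auto
  with \<open>downset L\<close> show ?thesis
  proof (cases rule: downset_cases)
    case UNIV
    then show ?thesis using \<open>0 \<le> \<xi>\<close> P.prob_space Q.prob_space spaces by simp
  next
    case (lessThan a)
    then show ?thesis using abs_measure_lessThan_diff_le[OF assms(1-5)] by simp
  qed (use atMost \<open>0 \<le> \<xi>\<close> in simp_all)
qed

section \<open>Step functions of one real variable\<close>

definition three_step :: "(real \<Rightarrow> 'b) \<Rightarrow> bool" where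
  "three_step \<phi> \<longleftrightarrow> (\<exists>L1 L2 z0 z1 z2. downset L1 \<and> downset L2 \<and> L1 \<subseteq> L2 \<and>
     (\<forall>y\<in>L1. \<phi> y = z0) \<and> (\<forall>y\<in>L2 - L1. \<phi> y = z1) \<and> (\<forall>y\<in>- L2. \<phi> y = z2))"

lemma abs_measure_vimage_diff_le_three_step:
  fixes P Q :: "real measure"
  assumes P: "prob_space P" and Q: "prob_space Q"
    and sets: "sets P = sets borel" "sets Q = sets borel"
    and atMost: "\<And>a. \<bar>measure P {..a} - measure Q {..a}\<bar> \<le> \<xi>"
    and "three_step \<phi>"
  shows "\<bar>measure P (\<phi> -` E) - measure Q (\<phi> -` E)\<bar> \<le> 2 * \<xi>"
proof -
  obtain L1 L2 z0 z1 z2 where L: "downset L1" "downset L2" "L1 \<subseteq> L2"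
    and \<phi>: "\<forall>y\<in>L1. \<phi> y = z0" "\<forall>y\<in>L2 - L1. \<phi> y = z1" "\<forall>y\<in>- L2. \<phi> y = z2"
    using \<open>three_step \<phi>\<close> unfolding three_step_def by blast
  note L_sets = borel_downset[OF L(1)] borel_downset[OF L(2)]
  note L_diff = abs_measure_downset_diff_le[OF P Q sets atMost L(1)]
    abs_measure_downset_diff_le[OF P Q sets atMost L(2)]
  define X0 where "X0 = (if z0 \<in> E then L1 else {})"
  define X1 where "X1 = (if z1 \<in> E then L2 - L1 else {})"
  define X2 where "X2 = (if z2 \<in> E then - L2 else {})"
  have vimage: "\<phi> -` E = (X0 \<union> X1) \<union> X2"
    unfolding X0_def X1_def X2_def using \<phi> \<open>L1 \<subseteq> L2\<close> by (auto; metis Compl_iff Diff_iff)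
  have X_sets: "X0 \<in> sets borel" "X1 \<in> sets borel" "X2 \<in> sets borel"
    unfolding X0_def X1_def X2_def using L_sets by auto
  have disjoint: "X0 \<inter> X1 = {}" "(X0 \<union> X1) \<inter> X2 = {}"
    unfolding X0_def X1_def X2_def using \<open>L1 \<subseteq> L2\<close> by auto
  have "measure M (\<phi> -` E) = measure M X0 + measure M X1 + measure M X2"
    and "measure M (L2 - L1) = measure M L2 - measure M L1"
    and "measure M (- L2) = 1 - measure M L2"
    if "prob_space M" "sets M = sets borel" for M
  proof -
    interpret M: prob_space M by fact
    have "space M = UNIV" using sets_eq_imp_space_eq[OF \<open>sets M = sets borel\<close>] by simp
    moreover have univ: "measure M UNIV = 1" using M.prob_space calculation by simp
    ultimately show "measure M (\<phi> -` E) = measure M X0 + measure M X1 + measure M X2"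
      "measure M (L2 - L1) = measure M L2 - measure M L1"
      "measure M (- L2) = 1 - measure M L2"
      unfolding vimage using X_sets L_sets disjoint \<open>L1 \<subseteq> L2\<close> \<open>sets M = sets borel\<close>
      by (simp_all add: M.finite_measure_Union M.finite_measure_Diff M.prob_compl Compl_eq_Diff_UNIV univ)
  qed
  note P_eqs = this[OF P sets(1)] and Q_eqs = this[OF Q sets(2)]
  \<comment> \<open>In each case both sides are combinations of the measures of L1 and L2 with coefficients
    in {-1, 0, 1}; this is why the bound is 2 xi and not 3 xi.\<close>
  show ?thesis
    unfolding P_eqs(1) Q_eqs(1) X0_def X1_def X2_def using L_diff[unfolded abs_le_iff]
    by (cases "z0 \<in> E"; cases "z1 \<in> E"; cases "z2 \<in> E";
        simp add: P_eqs(2,3) Q_eqs(2,3) abs_le_iff; linarith)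
qed

section \<open>The purchased set as a function of one item value\<close>

definition maximizers :: "'a set \<Rightarrow> ('a \<Rightarrow> real) \<Rightarrow> 'a set" where
  "maximizers F g = {A\<in>F. g A = Max (g ` F)}"

lemma maximizers_nonempty: "finite F \<Longrightarrow> F \<noteq> {} \<Longrightarrow> maximizers F g \<noteq> {}"
  using Max_in[of "g ` F"] by (fastforce simp: maximizers_def)

lemma maximizers_switch:
  fixes f :: "'a \<Rightarrow> real \<Rightarrow> real"
  assumes "finite F" "F \<noteq> {}"
    and f_eq: "\<And>A y. A \<in> F \<Longrightarrow> f A y = (if A \<in> K then max (c A) (a A + y) else c A)"
  obtains W1 W2 x0 where "W1 \<noteq> {}" "W2 \<noteq> {}" "W1 \<subseteq> F" "W2 \<subseteq> F"
    and "\<forall>y<x0. maximizers F (\<lambda>A. f A y) = W1"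
    and "\<forall>y>x0. maximizers F (\<lambda>A. f A y) = W2"
    and "maximizers F (\<lambda>A. f A x0) = W1 \<union> W2"
proof (cases "F \<inter> K = {}")
  case True
  then have f_const: "f A y = c A" if "A \<in> F" for A y
    using that f_eq by auto
  then have "(\<lambda>A. f A y) ` F = c ` F" for y
    by (auto simp: image_iff)
  then have "maximizers F (\<lambda>A. f A y) = maximizers F c" for y
    using f_const by (auto simp: maximizers_def)
  moreover have "maximizers F c \<noteq> {}"
    using assms(1,2) by (rule maximizers_nonempty)
  ultimately show ?thesis
    using that[of "maximizers F c" "maximizers F c" 0] by (auto simp: maximizers_def)
next
  case False
  define C where "C = Max (c ` F)"
  define b where "b = Max (a ` (F \<inter> K))"
  define W1 where "W1 = {A\<in>F. c A = C}"
  define W2 where "W2 = {A\<in>F \<inter> K. a A = b}"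
  have c_le: "c A \<le> C" if "A \<in> F" for A
    using that \<open>finite F\<close> by (simp add: C_def)
  have a_le: "a A \<le> b" if "A \<in> F" "A \<in> K" for A
    using that \<open>finite F\<close> by (simp add: b_def)
  have "C \<in> c ` F" "b \<in> a ` (F \<inter> K)"
    using Max_in \<open>finite F\<close> \<open>F \<noteq> {}\<close> False by (auto simp: C_def b_def)
  then have "W1 \<noteq> {}" "W2 \<noteq> {}" by (auto simp: W1_def W2_def)
  have f_le: "f A y \<le> max C (b + y)" if "A \<in> F" for A y
    using c_le[OF that] a_le[OF that] f_eq[OF that] by (cases "A \<in> K") (auto simp: max_def)
  have f_eq_iff: "f A y = max C (b + y) \<longleftrightarrow> (A \<in> W1 \<and> b + y \<le> C) \<or> (A \<in> W2 \<and> C \<le> b + y)"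
    if "A \<in> F" for A y
    using that c_le[OF that] a_le[OF that] f_eq[OF that]
    by (cases "A \<in> K") (auto simp: W1_def W2_def max_def)
  have Max_eq: "Max ((\<lambda>A. f A y) ` F) = max C (b + y)" for y
  proof (rule Max_eqI)
    obtain A1 A2 where "A1 \<in> W1" "A2 \<in> W2"
      using \<open>W1 \<noteq> {}\<close> \<open>W2 \<noteq> {}\<close> by blast
    moreover from this have "A1 \<in> F" "A2 \<in> F" by (auto simp: W1_def W2_def)
    ultimately show "max C (b + y) \<in> (\<lambda>A. f A y) ` F"
      using f_eq_iff[of A1 y] f_eq_iff[of A2 y] by (metis (mono_tags) nle_le rev_image_eqI)
  qed (use \<open>finite F\<close> f_le in auto)
  have "W1 \<subseteq> F" "W2 \<subseteq> F" by (auto simp: W1_def W2_def)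
  have "maximizers F (\<lambda>A. f A y) =
      (if b + y \<le> C then W1 else {}) \<union> (if C \<le> b + y then W2 else {})" for y
  proof (intro set_eqI)
    fix A
    show "A \<in> maximizers F (\<lambda>A. f A y) \<longleftrightarrow>
        A \<in> (if b + y \<le> C then W1 else {}) \<union> (if C \<le> b + y then W2 else {})"
      unfolding maximizers_def Max_eq using f_eq_iff[of A y] \<open>W1 \<subseteq> F\<close> \<open>W2 \<subseteq> F\<close> by auto
  qed
  then show ?thesis
    by (intro that[of W1 W2 "C - b"] \<open>W1 \<noteq> {}\<close> \<open>W2 \<noteq> {}\<close> \<open>W1 \<subseteq> F\<close> \<open>W2 \<subseteq> F\<close>) auto
qed

lemma arg_min_nat_eq_iff:
  fixes prio :: "'a \<Rightarrow> nat"
  assumes "inj_on prio W" "W \<noteq> {}"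
  shows "(ARG_MIN prio A. A \<in> W) = a \<longleftrightarrow> a \<in> W \<and> (\<forall>B\<in>W. prio a \<le> prio B)"
proof -
  obtain w where "w \<in> W" using assms(2) by blast
  then have "(ARG_MIN prio A. A \<in> W) \<in> W" "\<forall>B\<in>W. prio (ARG_MIN prio A. A \<in> W) \<le> prio B"
    using arg_min_nat_lemma[of "\<lambda>A. A \<in> W" w prio] by auto
  then show ?thesis
    using inj_onD[OF assms(1)] by (meson antisym)
qed

lemma arg_min_nat_Un_cases:
  fixes prio :: "'a \<Rightarrow> nat"
  assumes "inj_on prio (W1 \<union> W2)" "W1 \<noteq> {}" "W2 \<noteq> {}"
  shows "(ARG_MIN prio A. A \<in> W1 \<union> W2) \<in> {ARG_MIN prio A. A \<in> W1, ARG_MIN prio A. A \<in> W2}"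
proof -
  let ?u = "ARG_MIN prio A. A \<in> W1 \<union> W2"
  have "?u \<in> W1 \<union> W2" "\<forall>B\<in>W1 \<union> W2. prio ?u \<le> prio B"
    using arg_min_nat_eq_iff[OF assms(1), of ?u] assms(2) by auto
  then show ?thesis
    using arg_min_nat_eq_iff[OF inj_on_subset[OF assms(1)], of W1 ?u]
      arg_min_nat_eq_iff[OF inj_on_subset[OF assms(1)], of W2 ?u] assms(2,3)
    by auto
qed

lemma three_step_choice:
  fixes f :: "'a \<Rightarrow> real \<Rightarrow> real" and prio :: "'a \<Rightarrow> nat"
  assumes "finite F" "F \<noteq> {}" "inj_on prio F"
    and f_eq: "\<And>A y. A \<in> F \<Longrightarrow> f A y = (if A \<in> K then max (c A) (a A + y) else c A)"
  shows "three_step (\<lambda>y. if \<delta> \<le> Max ((\<lambda>A. f A y) ` F)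
                          then ARG_MIN prio A. A \<in> maximizers F (\<lambda>A. f A y) else z)"
proof -
  obtain W1 W2 x0 where W: "W1 \<noteq> {}" "W2 \<noteq> {}" "W1 \<subseteq> F" "W2 \<subseteq> F"
    and below: "\<forall>y<x0. maximizers F (\<lambda>A. f A y) = W1"
    and above: "\<forall>y>x0. maximizers F (\<lambda>A. f A y) = W2"
    and at: "maximizers F (\<lambda>A. f A x0) = W1 \<union> W2"
    using assms(1,2) f_eq by (rule maximizers_switch)
  define g where "g W = (ARG_MIN prio A. A \<in> W)" for W
  \<comment> \<open>At the switch point x0 both W1 and W2 are maximal and prio decides which side x0 joins.\<close>
  define V where "V = (if g (W1 \<union> W2) = g W1 then {..x0} else {..<x0})"
  have g_Un: "g (W1 \<union> W2) \<in> {g W1, g W2}"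
    unfolding g_def using W by (intro arg_min_nat_Un_cases inj_on_subset[OF \<open>inj_on prio F\<close>]) auto
  have g_V: "g (maximizers F (\<lambda>A. f A y)) = (if y \<in> V then g W1 else g W2)" for y
  proof (cases y x0 rule: linorder_cases)
    case equal
    then show ?thesis using at g_Un by (auto simp: V_def)
  qed (simp_all add: below above V_def)
  have Max_mono: "Max ((\<lambda>A. f A u) ` F) \<le> Max ((\<lambda>A. f A v) ` F)" if "u \<le> v" for u v
  proof -
    have "f A u \<le> f A v" if "A \<in> F" for A
      using that \<open>u \<le> v\<close> f_eq[OF that] by auto
    then show ?thesis
      using \<open>finite F\<close> \<open>F \<noteq> {}\<close> by (auto simp: Max_le_iff intro: order_trans[OF _ Max_ge])
  qed
  define L1 where "L1 = {y. Max ((\<lambda>A. f A y) ` F) < \<delta>}"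
  have "downset L1"
    unfolding downset_def L1_def using Max_mono by (blast intro: le_less_trans)
  have "downset (L1 \<union> V)"
    using \<open>downset L1\<close> unfolding downset_def V_def by auto
  define \<phi> where "\<phi> = (\<lambda>y. if \<delta> \<le> Max ((\<lambda>A. f A y) ` F)
                          then ARG_MIN prio A. A \<in> maximizers F (\<lambda>A. f A y) else z)"
  have "\<phi> y = (if y \<in> L1 then z else if y \<in> V then g W1 else g W2)" for y
    unfolding \<phi>_def L1_def g_def[symmetric] g_V by (simp add: not_le)
  then have "\<forall>y\<in>L1. \<phi> y = z" "\<forall>y\<in>(L1 \<union> V) - L1. \<phi> y = g W1" "\<forall>y\<in>- (L1 \<union> V). \<phi> y = g W2"
    by auto
  with \<open>downset L1\<close> \<open>downset (L1 \<union> V)\<close> have "three_step \<phi>"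
    unfolding three_step_def by blast
  then show ?thesis
    unfolding \<phi>_def .
qed

lemma util_fun_upd:
  fixes x p :: "nat \<Rightarrow> real" and k :: nat
  assumes "finite A" "{} \<in> I"
  defines "c \<equiv> Max ((\<lambda>R. sum x R) ` {R. R \<subseteq> A \<and> R \<in> I \<and> k \<notin> R}) - sum p A"
    and "a \<equiv> Max ((\<lambda>R. sum x (R - {k})) ` {R. R \<subseteq> A \<and> R \<in> I \<and> k \<in> R}) - sum p A"
  shows "util I p (x(k:=y)) A = (if \<exists>R\<in>I. R \<subseteq> A \<and> k \<in> R then max c (a + y) else c)"
proof -
  define R0 where "R0 = {R. R \<subseteq> A \<and> R \<in> I \<and> k \<notin> R}"
  define R1 where "R1 = {R. R \<subseteq> A \<and> R \<in> I \<and> k \<in> R}"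
  have "finite R0" "finite R1"
    using \<open>finite A\<close> by (auto simp: R0_def R1_def intro: finite_subset[of _ "Pow A"])
  have "R0 \<noteq> {}" using \<open>{} \<in> I\<close> by (auto simp: R0_def)
  have "sum (x(k:=y)) R = sum x R" if "R \<in> R0" for R
    using that by (intro sum.cong) (auto simp: R0_def)
  then have image_R0: "(\<lambda>R. sum (x(k:=y)) R) ` R0 = (\<lambda>R. sum x R) ` R0"
    by (auto simp: image_iff)
  have "sum (x(k:=y)) R = sum x (R - {k}) + y" if "R \<in> R1" for R
  proof -
    have "finite R" "k \<in> R" using that \<open>finite A\<close> by (auto simp: R1_def intro: finite_subset)
    then have "sum (x(k:=y)) R = y + sum (x(k:=y)) (R - {k})" by (simp add: sum.remove)
    also have "sum (x(k:=y)) (R - {k}) = sum x (R - {k})" by (intro sum.cong) auto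
    finally show ?thesis by simp
  qed
  then have image_R1: "(\<lambda>R. sum (x(k:=y)) R) ` R1 = (\<lambda>R. sum x (R - {k}) + y) ` R1"
    by (auto simp: image_iff)
  have "{R. R \<subseteq> A \<and> R \<in> I} = R0 \<union> R1" by (auto simp: R0_def R1_def)
  then have util: "util I p (x(k:=y)) A =
      Max ((\<lambda>R. sum x R) ` R0 \<union> (\<lambda>R. sum x (R - {k}) + y) ` R1) - sum p A"
    by (simp only: util_def cadd_val_def image_Un image_R0 image_R1)
  have c_eq: "c = Max ((\<lambda>R. sum x R) ` R0) - sum p A"
    and a_eq: "a = Max ((\<lambda>R. sum x (R - {k})) ` R1) - sum p A"
    by (simp_all add: c_def a_def R0_def R1_def)
  show ?thesis
  proof (cases "R1 = {}")
    case True
    then have "\<not> (\<exists>R\<in>I. R \<subseteq> A \<and> k \<in> R)" by (auto simp: R1_def)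
    with True show ?thesis unfolding util c_eq by (subst if_not_P) simp_all
  next
    case False
    then have "\<exists>R\<in>I. R \<subseteq> A \<and> k \<in> R" by (auto simp: R1_def)
    moreover have "Max ((\<lambda>R. sum x R) ` R0 \<union> (\<lambda>R. sum x (R - {k}) + y) ` R1) =
        max (Max ((\<lambda>R. sum x R) ` R0)) (Max ((\<lambda>R. sum x (R - {k})) ` R1) + y)"
      using False \<open>finite R0\<close> \<open>finite R1\<close> \<open>R0 \<noteq> {}\<close> by (simp add: Max_Un Max_add_commute)
    ultimately show ?thesis
      unfolding util c_eq a_eq by (simp add: max_diff_distrib_left)
  qed
qed

lemma purchased_eq:
  "purchased I prio S p \<delta> t =
    (if \<delta> \<le> Max (util I p t ` Pow S) then ARG_MIN prio A. A \<in> maximizers (Pow S) (util I p t) else {})"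
  by (simp add: purchased_def maximizers_def Let_def)

lemma three_step_purchased:
  assumes "finite S" "{} \<in> I" "inj_on prio (Pow S)"
  shows "three_step (\<lambda>y. purchased I prio S p \<delta> (x(k:=y)))"
proof -
  define c where "c A = Max ((\<lambda>R. sum x R) ` {R. R \<subseteq> A \<and> R \<in> I \<and> k \<notin> R}) - sum p A" for A
  define a where "a A = Max ((\<lambda>R. sum x (R - {k})) ` {R. R \<subseteq> A \<and> R \<in> I \<and> k \<in> R}) - sum p A"
    for A
  have util: "util I p (x(k:=y)) A =
      (if A \<in> {A. \<exists>R\<in>I. R \<subseteq> A \<and> k \<in> R} then max (c A) (a A + y) else c A)"
    if "A \<in> Pow S" for A y
  proof -
    have "finite A" using that \<open>finite S\<close> by (auto intro: finite_subset)
    then show ?thesis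
      by (simp only: util_fun_upd[OF _ \<open>{} \<in> I\<close>] mem_Collect_eq c_def a_def)
  qed
  have "finite (Pow S)" "Pow S \<noteq> {}" using \<open>finite S\<close> by auto
  then show ?thesis
    unfolding purchased_eq using \<open>inj_on prio (Pow S)\<close> util by (rule three_step_choice)
qed

lemma borel_measurable_util:
  assumes "finite A" "A \<subseteq> J"
  shows "(\<lambda>t. util I p t A) \<in> borel_measurable (PiM J (\<lambda>_. borel :: real measure))"
proof -
  have "finite {R. R \<subseteq> A \<and> R \<in> I}"
    using assms(1) by (auto intro: finite_subset[of _ "Pow A"])
  moreover have "(\<lambda>t. sum t R) \<in> borel_measurable (PiM J (\<lambda>_. borel :: real measure))" if "R \<subseteq> A" for R
  proof -
    have "(\<lambda>t. t j) \<in> borel_measurable (PiM J (\<lambda>_. borel :: real measure))" if "j \<in> R" for j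
      using that \<open>R \<subseteq> A\<close> assms(2) by (intro measurable_component_singleton) auto
    from borel_measurable_sum[where f="\<lambda>j t. t j" and S=R, OF this] show ?thesis .
  qed
  ultimately show ?thesis
    unfolding util_def cadd_val_def by (intro borel_measurable_diff borel_measurable_Max) auto
qed

lemma measurable_purchased:
  fixes R :: "nat \<Rightarrow> real measure"
  assumes "finite S" "S \<subseteq> J" "inj_on prio (Pow S)" and sets_R: "\<And>i. i \<in> J \<Longrightarrow> sets (R i) = sets borel"
  shows "purchased I prio S p \<delta> \<in> PiM J R \<rightarrow>\<^sub>M count_space UNIV"
proof -
  define M where "M = PiM J (\<lambda>_. borel :: real measure)"
  define Mx where "Mx t = Max (util I p t ` Pow S)" for t
  have "finite (Pow S)" "Pow S \<noteq> {}" using \<open>finite S\<close> by auto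
  have util: "(\<lambda>t. util I p t A) \<in> borel_measurable M" if "A \<in> Pow S" for A
    unfolding M_def using that assms(1,2) by (intro borel_measurable_util) (auto intro: finite_subset)
  then have Mx: "Mx \<in> borel_measurable M"
    unfolding Mx_def using borel_measurable_Max[OF \<open>finite (Pow S)\<close>, of "\<lambda>A t. util I p t A"]
    by simp
  define W where "W t = maximizers (Pow S) (util I p t)" for t
  have W: "W t \<noteq> {}" "W t \<subseteq> Pow S" for t
    using maximizers_nonempty[OF \<open>finite (Pow S)\<close> \<open>Pow S \<noteq> {}\<close>]
    by (auto simp: W_def maximizers_def)
  have W_sets: "{t \<in> space M. A \<in> W t} \<in> sets M" if "A \<in> Pow S" for A
    using borel_measurable_eq[OF util[OF that] Mx] that by (simp add: W_def maximizers_def Mx_def)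
  have winner_eq: "(ARG_MIN prio A. A \<in> W t) = a \<longleftrightarrow>
      a \<in> W t \<and> (\<forall>B\<in>Pow S. B \<in> W t \<longrightarrow> prio a \<le> prio B)" for t a
    unfolding arg_min_nat_eq_iff[OF inj_on_subset[OF \<open>inj_on prio (Pow S)\<close> W(2)] W(1)]
    using W(2)[of t] by blast
  have purchased: "purchased I prio S p \<delta> t = (if \<delta> \<le> Mx t then ARG_MIN prio A. A \<in> W t else {})"
    for t
    by (simp add: purchased_eq Mx_def W_def)
  have "purchased I prio S p \<delta> \<in> M \<rightarrow>\<^sub>M count_space (Pow S)"
  proof (subst measurable_count_space_eq2[OF \<open>finite (Pow S)\<close>], intro conjI ballI)
    have "(ARG_MIN prio A. A \<in> W t) \<in> Pow S" for t
      using winner_eq[of t "ARG_MIN prio A. A \<in> W t"] W(2) by blast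
    then show "purchased I prio S p \<delta> \<in> space M \<rightarrow> Pow S"
      by (simp add: purchased)
    fix a assume "a \<in> Pow S"
    have "purchased I prio S p \<delta> -` {a} \<inter> space M =
        {t \<in> space M. (\<delta> \<le> Mx t \<and> a \<in> W t \<and> (\<forall>B\<in>Pow S. B \<in> W t \<longrightarrow> prio a \<le> prio B))
          \<or> (\<not> \<delta> \<le> Mx t \<and> a = {})}"
    proof -
      have "purchased I prio S p \<delta> t = a \<longleftrightarrow>
          (\<delta> \<le> Mx t \<and> (ARG_MIN prio A. A \<in> W t) = a) \<or> (\<not> \<delta> \<le> Mx t \<and> a = {})" for t
        by (auto simp: purchased)
      then show ?thesis
        unfolding winner_eq by blast
    qed
    also have "\<dots> \<in> sets M"
      using borel_measurable_le[OF borel_measurable_const Mx] W_sets \<open>a \<in> Pow S\<close>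
      by (intro sets.sets_Collect_disj sets.sets_Collect_conj sets.sets_Collect_finite_All'
          sets.sets_Collect_imp sets.sets_Collect_neg sets.sets_Collect_const \<open>finite (Pow S)\<close>)
        auto
    finally show "purchased I prio S p \<delta> -` {a} \<inter> space M \<in> sets M" .
  qed
  then have in_M: "purchased I prio S p \<delta> \<in> M \<rightarrow>\<^sub>M count_space UNIV"
    by (rule measurable_compose) simp
  have "PiM J R \<rightarrow>\<^sub>M count_space (UNIV :: nat set set) = M \<rightarrow>\<^sub>M count_space UNIV"
    unfolding M_def by (intro measurable_cong_sets sets_PiM_cong) (simp_all add: sets_R)
  with in_M show ?thesis by simp
qed

section \<open>Changing one coordinate of a product measure\<close>

lemma sets_PiM_section:
  assumes x: "x \<in> space (PiM (J - {k}) M)" and "k \<in> J" and A: "A \<in> sets (PiM J M)"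
  shows "{y. x(k := y) \<in> A} \<in> sets (M k)"
proof -
  have "(\<lambda>y. x(k := y)) \<in> M k \<rightarrow>\<^sub>M PiM J M"
    using measurable_component_update[OF x, of k] \<open>k \<in> J\<close> insert_Diff by fastforce
  moreover have "y \<in> space (M k)" if "x(k := y) \<in> A" for y
    using PiE_mem[OF subsetD[OF sets.sets_into_space[OF A] that, unfolded space_PiM] \<open>k \<in> J\<close>]
    by simp
  then have "{y. x(k := y) \<in> A} = (\<lambda>y. x(k := y)) -` A \<inter> space (M k)"
    by auto
  ultimately show ?thesis
    using measurable_sets[OF _ A] by simp
qed

lemma measure_PiM_le_sections:
  assumes M: "\<And>i. prob_space (M i)" and N: "\<And>i. prob_space (N i)"
    and eq: "\<And>i. i \<noteq> k \<Longrightarrow> M i = N i" and sets_k: "sets (M k) = sets (N k)"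
    and "finite J" "k \<in> J" and A: "A \<in> sets (PiM J M)" and "0 \<le> c"
    and sections: "\<And>x. x \<in> space (PiM (J - {k}) M) \<Longrightarrow>
      measure (M k) {y. x(k := y) \<in> A} \<le> measure (N k) {y. x(k := y) \<in> A} + c"
  shows "measure (PiM J M) A \<le> measure (PiM J N) A + c"
proof -
  define I where "I = J - {k}"
  have J: "J = insert k I" "k \<notin> I" "finite I" using \<open>finite J\<close> \<open>k \<in> J\<close> by (auto simp: I_def)
  interpret M: product_sigma_finite M
    unfolding product_sigma_finite_def using M by (simp add: prob_space_imp_sigma_finite)
  interpret N: product_sigma_finite N
    unfolding product_sigma_finite_def using N by (simp add: prob_space_imp_sigma_finite)
  interpret PM: prob_space "PiM J M" using M by (rule prob_space_PiM)
  interpret PN: prob_space "PiM J N" using N by (rule prob_space_PiM)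
  interpret Mk: prob_space "M k" by (rule M)
  interpret Nk: prob_space "N k" by (rule N)
  have "sets (PiM J M) = sets (PiM J N)"
    using eq sets_k by (intro sets_PiM_cong) (simp, metis)
  then have A_N: "A \<in> sets (PiM J N)" using A by simp
  have off_k: "PiM I M = PiM I N"
    using eq J(2) by (intro PiM_cong) (auto, metis)
  have inner: "(\<integral>\<^sup>+ y. indicator A (x(k := y)) \<partial>M k) \<le> (\<integral>\<^sup>+ y. indicator A (x(k := y)) + ennreal c \<partial>N k)"
    if x: "x \<in> space (PiM I M)" for x
  proof -
    define Ax where "Ax = {y. x(k := y) \<in> A}"
    have "Ax \<in> sets (M k)" "Ax \<in> sets (N k)"
      using sets_PiM_section[OF x[unfolded I_def] \<open>k \<in> J\<close> A] sets_k by (simp_all add: Ax_def)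
    moreover have ind: "indicator A (x(k := y)) = (indicator Ax y :: ennreal)" for y
      by (simp add: Ax_def indicator_def)
    moreover have "ennreal (measure (M k) Ax) \<le> ennreal (measure (N k) Ax + c)"
      using sections[OF x[unfolded I_def]] by (simp add: Ax_def ennreal_leI)
    ultimately show ?thesis
      using \<open>0 \<le> c\<close>
      by (simp add: nn_integral_add Mk.emeasure_eq_measure Nk.emeasure_eq_measure Nk.prob_space
          ennreal_plus)
  qed
  have "ennreal (measure (PiM J M) A) = (\<integral>\<^sup>+ t. indicator A t \<partial>PiM J M)"
    using A by (simp add: PM.emeasure_eq_measure)
  also have "\<dots> = (\<integral>\<^sup>+ x. (\<integral>\<^sup>+ y. indicator A (x(k := y)) \<partial>M k) \<partial>PiM I M)"
    unfolding J(1) using A J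
    by (intro M.product_nn_integral_insert borel_measurable_indicator) simp_all
  also have "\<dots> \<le> (\<integral>\<^sup>+ x. (\<integral>\<^sup>+ y. indicator A (x(k := y)) + ennreal c \<partial>N k) \<partial>PiM I N)"
    unfolding off_k[symmetric] using inner by (intro nn_integral_mono) simp
  also have "\<dots> = (\<integral>\<^sup>+ t. indicator A t + ennreal c \<partial>PiM J N)"
    unfolding J(1) using A_N J
    by (intro N.product_nn_integral_insert[symmetric] borel_measurable_add borel_measurable_indicator)
      simp_all
  also have "\<dots> = ennreal (measure (PiM J N) A + c)"
    using A_N \<open>0 \<le> c\<close>
    by (simp add: nn_integral_add PN.emeasure_eq_measure PN.prob_space ennreal_plus)
  finally show ?thesis
    using \<open>0 \<le> c\<close> ennreal_le_iff[of "measure (PiM J N) A + c"] by simp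
qed

lemma abs_measure_PiM_diff_le_sections:
  fixes c :: real
  assumes M: "\<And>i. prob_space (M i)" and N: "\<And>i. prob_space (N i)"
    and eq: "\<And>i. i \<noteq> k \<Longrightarrow> M i = N i" and sets_k: "sets (M k) = sets (N k)"
    and "finite J" "k \<in> J" and A: "A \<in> sets (PiM J M)"
    and sections: "\<And>x. x \<in> space (PiM (J - {k}) M) \<Longrightarrow>
      \<bar>measure (M k) {y. x(k := y) \<in> A} - measure (N k) {y. x(k := y) \<in> A}\<bar> \<le> c"
  shows "\<bar>measure (PiM J M) A - measure (PiM J N) A\<bar> \<le> c"
proof -
  have "space (PiM (J - {k}) M) \<noteq> {}"
    using M by (simp add: space_PiM PiE_eq_empty_iff prob_space.not_empty)
  then have "0 \<le> c"
    using sections by (meson abs_ge_zero ex_in_conv order_trans)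
  have off_k: "PiM (J - {k}) N = PiM (J - {k}) M"
    using eq by (intro PiM_cong) auto
  have A_N: "A \<in> sets (PiM J N)"
    using A eq sets_k by (metis sets_PiM_cong)
  have sections_le:
    "measure (M k) {y. x(k := y) \<in> A} \<le> measure (N k) {y. x(k := y) \<in> A} + c"
    "measure (N k) {y. x(k := y) \<in> A} \<le> measure (M k) {y. x(k := y) \<in> A} + c"
    if "x \<in> space (PiM (J - {k}) M)" for x
    using sections[OF that] by linarith+
  have "measure (PiM J M) A \<le> measure (PiM J N) A + c"
    using M N eq sets_k \<open>finite J\<close> \<open>k \<in> J\<close> A \<open>0 \<le> c\<close> sections_le(1)
    by (rule measure_PiM_le_sections)
  moreover have "measure (PiM J N) A \<le> measure (PiM J M) A + c"
    using N M eq[symmetric] sets_k[symmetric] \<open>finite J\<close> \<open>k \<in> J\<close> A_N \<open>0 \<le> c\<close>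
      sections_le(2)[folded off_k]
    by (rule measure_PiM_le_sections)
  ultimately show ?thesis by linarith
qed

lemma abs_measure_PiM_diff_le:
  fixes c :: real
  assumes "finite J" and M: "\<And>i. prob_space (M i)" and N: "\<And>i. prob_space (N i)"
    and sets_eq: "\<And>i. sets (M i) = sets (N i)" and A: "A \<in> sets (PiM J M)"
    and sections: "\<And>k x. k \<in> J \<Longrightarrow> x \<in> space (PiM (J - {k}) M) \<Longrightarrow>
      \<bar>measure (M k) {y. x(k := y) \<in> A} - measure (N k) {y. x(k := y) \<in> A}\<bar> \<le> c"
  shows "\<bar>measure (PiM J M) A - measure (PiM J N) A\<bar> \<le> real (card J) * c"
proof -
  define H where "H B i = (if i \<in> B then N i else M i)" for B i
  have H_prob: "prob_space (H B i)" for B i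
    using M N by (simp add: H_def)
  have H_sets: "sets (H B i) = sets (M i)" for B i
    using sets_eq by (simp add: H_def)
  have H_space: "space (PiM I (H B)) = space (PiM I M)" for I B
    using sets_eq_imp_space_eq[OF H_sets] by (simp add: space_PiM)
  have "\<bar>measure (PiM J M) A - measure (PiM J (H B)) A\<bar> \<le> real (card B) * c" if "B \<subseteq> J" for B
    using finite_subset[OF that \<open>finite J\<close>] that
  proof (induction B rule: finite_induct)
    case empty
    then show ?case by (simp add: H_def)
  next
    case (insert k B)
    have "\<bar>measure (PiM J (H B)) A - measure (PiM J (H (insert k B))) A\<bar> \<le> c"
    proof (rule abs_measure_PiM_diff_le_sections[OF H_prob H_prob])
      show "A \<in> sets (PiM J (H B))"
        using A H_sets by (metis sets_PiM_cong)
      show "\<bar>measure (H B k) {y. x(k := y) \<in> A} - measure (H (insert k B) k) {y. x(k := y) \<in> A}\<bar> \<le> c"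
        if "x \<in> space (PiM (J - {k}) (H B))" for x
        using sections[of k x] that insert by (simp add: H_def H_space)
    qed (use insert \<open>finite J\<close> sets_eq in \<open>auto simp: H_def\<close>)
    then show ?case
      using insert by (simp add: algebra_simps)
  qed
  moreover have "PiM J (H J) = PiM J N"
    by (intro PiM_cong) (simp_all add: H_def)
  ultimately show ?thesis
    by fastforce
qed

lemma section_vimage_PiM:
  assumes "x \<in> space (PiM (J - {k}) M)" "k \<in> J" "space (M k) = UNIV"
  shows "{y. x(k := y) \<in> f -` E \<inter> space (PiM J M)} = (\<lambda>y. f (x(k := y))) -` E"
  using assms PiE_fun_upd[of _ "\<lambda>i. space (M i)" k x "J - {k}"] by (auto simp: space_PiM insert_absorb)

lemma tv_dist_distr_le:
  assumes "f \<in> M \<rightarrow>\<^sub>M count_space UNIV" "f \<in> N \<rightarrow>\<^sub>M count_space UNIV"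
    and "\<And>E. \<bar>measure M (f -` E \<inter> space M) - measure N (f -` E \<inter> space N)\<bar> \<le> c"
  shows "tv_dist (distr M (count_space UNIV) f) (distr N (count_space UNIV) f) \<le> c"
  unfolding tv_dist_def using assms by (intro cSUP_least) (auto simp: measure_distr)

lemma tv_dist_purchased_le:
  fixes P Q :: "nat \<Rightarrow> real measure"
  assumes "finite J" and P: "\<And>i. prob_space (P i)" and Q: "\<And>i. prob_space (Q i)"
    and sets: "\<And>i. sets (P i) = sets borel" "\<And>i. sets (Q i) = sets borel"
    and kolmogorov: "\<And>k a. k \<in> J \<Longrightarrow> \<bar>measure (P k) {..a} - measure (Q k) {..a}\<bar> \<le> \<xi>"
    and "finite S" "S \<subseteq> J" "{} \<in> I" "inj_on prio (Pow S)"
  shows "tv_dist (distr (PiM J P) (count_space UNIV) (purchased I prio S p \<delta>))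
           (distr (PiM J Q) (count_space UNIV) (purchased I prio S p \<delta>)) \<le> 2 * real (card J) * \<xi>"
proof (rule tv_dist_distr_le)
  let ?f = "purchased I prio S p \<delta>"
  show meas: "?f \<in> PiM J P \<rightarrow>\<^sub>M count_space UNIV" "?f \<in> PiM J Q \<rightarrow>\<^sub>M count_space UNIV"
    using assms(7-8,10) sets by (auto intro: measurable_purchased)
  have space_P: "space (P k) = UNIV" for k
    using sets_eq_imp_space_eq[OF sets(1)] by simp
  have "space (PiM J Q) = space (PiM J P)"
    using sets_eq_imp_space_eq[OF sets(2)] space_P by (simp add: space_PiM)
  moreover have "\<bar>measure (PiM J P) (?f -` E \<inter> space (PiM J P))
      - measure (PiM J Q) (?f -` E \<inter> space (PiM J P))\<bar> \<le> real (card J) * (2 * \<xi>)" for E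
  proof (rule abs_measure_PiM_diff_le[OF \<open>finite J\<close> P Q])
    show "?f -` E \<inter> space (PiM J P) \<in> sets (PiM J P)"
      by (rule measurable_sets[OF meas(1)]) simp
    fix k x assume "k \<in> J" and x: "x \<in> space (PiM (J - {k}) P)"
    have "three_step (\<lambda>y. ?f (x(k := y)))"
      using \<open>finite S\<close> \<open>{} \<in> I\<close> \<open>inj_on prio (Pow S)\<close> by (rule three_step_purchased)
    then show "\<bar>measure (P k) {y. x(k := y) \<in> ?f -` E \<inter> space (PiM J P)}
        - measure (Q k) {y. x(k := y) \<in> ?f -` E \<inter> space (PiM J P)}\<bar> \<le> 2 * \<xi>"
      unfolding section_vimage_PiM[OF x \<open>k \<in> J\<close> space_P]
      using \<open>k \<in> J\<close> kolmogorov by (intro abs_measure_vimage_diff_le_three_step[OF P Q sets]) auto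
  qed (simp add: sets)
  ultimately show "\<bar>measure (PiM J P) (?f -` E \<inter> space (PiM J P))
      - measure (PiM J Q) (?f -` E \<inter> space (PiM J Q))\<bar> \<le> 2 * real (card J) * \<xi>" for E
    by (simp add: mult.commute mult.left_commute)
qed

theorem mainTheorem19:
  fixes m :: nat
    and I :: "nat set set"
    and D Dh :: "nat \<Rightarrow> real measure"
    and \<xi> :: real
    and S :: "nat set"
    and p :: "nat \<Rightarrow> real"
    and \<delta> :: real
    and prio :: "nat set \<Rightarrow> nat"
  assumes I_sub: "I \<subseteq> Pow {0..<m}"
    and I_dc: "downward_closed I"
    and I_empty: "{} \<in> I"
    and D_prob: "\<And>j. j < m \<Longrightarrow> prob_space (D j)"
    and Dh_prob: "\<And>j. j < m \<Longrightarrow> prob_space (Dh j)"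
    and D_borel: "\<And>j. j < m \<Longrightarrow> sets (D j) = sets borel"
    and Dh_borel: "\<And>j. j < m \<Longrightarrow> sets (Dh j) = sets borel"
    and D_nonneg: "\<And>j. j < m \<Longrightarrow> AE x in D j. 0 \<le> x"
    and Dh_nonneg: "\<And>j. j < m \<Longrightarrow> AE x in Dh j. 0 \<le> x"
    and close: "\<And>j. j < m \<Longrightarrow> kolmogorov_dist (D j) (Dh j) \<le> \<xi>"
    and S_sub: "S \<subseteq> {0..<m}"
    and rank_inj: "inj_on prio (Pow {0..<m})"
  shows "tv_dist
           (distr (PiM {0..<m} D) (count_space UNIV) (purchased I prio S p \<delta>))
           (distr (PiM {0..<m} Dh) (count_space UNIV) (purchased I prio S p \<delta>))
         \<le> 2 * real m * \<xi>"
proof -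
  \<comment> \<open>The product lemmas need probability measures at every index, but D j and Dh j are
    unconstrained for j \<ge> m: replace them there by point masses.\<close>
  define P where "P i = (if i < m then D i else return borel 0)" for i
  define Q where "Q i = (if i < m then Dh i else return borel 0)" for i
  have "PiM {0..<m} D = PiM {0..<m} P" "PiM {0..<m} Dh = PiM {0..<m} Q"
    by (auto simp: P_def Q_def intro: PiM_cong)
  moreover have "\<bar>measure (P k) {..a} - measure (Q k) {..a}\<bar> \<le> \<xi>" if "k \<in> {0..<m}" for k a
  proof -
    have "P k = D k" "Q k = Dh k" using that by (simp_all add: P_def Q_def)
    then show ?thesis
      using that abs_measure_atMost_diff_le_kolmogorov_dist[OF D_prob Dh_prob] close
      by (metis atLeastLessThan_iff order_trans)
  qed
  moreover have "finite S" "inj_on prio (Pow S)"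
    using S_sub rank_inj by (auto intro: finite_subset inj_on_subset)
  ultimately show ?thesis
    using tv_dist_purchased_le[where J="{0..<m}" and P=P and Q=Q and \<xi>=\<xi>] S_sub I_empty
      D_prob Dh_prob D_borel Dh_borel
    by (simp add: P_def Q_def prob_space_return)
qed

end
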